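(* For all $n\ge1$, $a_{\{0101,0102\}}(n)=a_{\{0101,0121\}}(n)=F_{2n-1}$, where $F_1=F_2=1$ and $F_k=F_{k-1}+F_{k-2}$ for $k\ge3$ are the Fibonacci numbers.
   Context: An ascent in an integer sequence $s_1\cdots s_m$ is an index $j$ with $s_j<s_{j+1}$; $\mathrm{asc}$ denotes the number of ascents. An ascent sequence is a sequence $x_1\cdots x_n$ of nonnegative integers with $x_1=0$ and $x_i\le 1+\mathrm{asc}(x_1\cdots x_{i-1})$ for all $i\ge2$. The reduction $\mathrm{red}(w)$ of an integer sequence $w$ replaces the $i$-th smallest distinct letter of $w$ by $i-1$; a pattern is a reduced sequence. A sequence $x$ contains a pattern $p=p_1\cdots p_k$ if there are indices $i_1<\cdots<i_k$ with $\mathrm{red}(x_{i_1}\cdots x_{i_k})=p$; otherwise $x$ avoids $p$. For a finite set $P$ of patterns, $a_P(n)$ denotes the number of ascent sequences of length $n$ avoiding every pattern in $P$. *)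

theory Defs
  imports Main "HOL-Number_Theory.Fib"
begin

definition asc :: "nat list \<Rightarrow> nat" where
  "asc s = card {j. Suc j < length s \<and> s ! j < s ! Suc j}"

definition ascent_seq :: "nat list \<Rightarrow> bool" where
  "ascent_seq x \<longleftrightarrow> x \<noteq> [] \<and> x ! 0 = 0 \<and>
     (\<forall>i. 0 < i \<and> i < length x \<longrightarrow> x ! i \<le> 1 + asc (take i x))"

(* reduction: the i-th smallest distinct letter is replaced by i-1 *)
definition red :: "nat list \<Rightarrow> nat list" where
  "red w = map (\<lambda>a. card {b \<in> set w. b < a}) w"

definition contains :: "nat list \<Rightarrow> nat list \<Rightarrow> bool" where
  "contains x p \<longleftrightarrow> (\<exists>I. red (nths x I) = p)"

definition avoids :: "nat list \<Rightarrow> nat list \<Rightarrow> bool" where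
  "avoids x p \<longleftrightarrow> \<not> contains x p"

definition a_P :: "nat list set \<Rightarrow> nat \<Rightarrow> nat" where
  "a_P P n = card {x. ascent_seq x \<and> length x = n \<and> (\<forall>p\<in>P. avoids x p)}"

end

theory Submission
  imports Defs "HOL-Library.Sublist"
begin

(* An ascent sequence avoids 0101 and
   0102 iff it climbs from 0 in steps of at most one and never increases again after its
   first descent; it avoids 0101 and 0121 iff every new letter is 0, a repetition of the last
   letter, or a new maximum. In both classes the number of ascents equals the maximum, so
   the ascent condition holds automatically.
   Counting the second class by whether the last letter is 0 gives s' = 2 s + p, p' = s + p.
   A sequence of the first class is 0 followed either by a sequence of the class or by a
   shifted one padded with zeros, which gives a' = a + b, b' = b + a'. Both systems are
   solved by consecutive Fibonacci numbers. *)

lemma set_mono_subseq: "subseq xs ys \<Longrightarrow> set xs \<subseteq> set ys"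
  by (auto simp: subseq_conv_nths dest: in_set_nthsD)

lemma sorted_subseq: "subseq xs ys \<Longrightarrow> sorted ys \<Longrightarrow> sorted xs"
  by (auto simp: subseq_conv_nths sorted_nths)

lemma subseq_snoc_iff:
  "subseq (xs @ [c]) (ys @ [v]) \<longleftrightarrow> subseq (xs @ [c]) ys \<or> c = v \<and> subseq xs ys"
proof
  assume "subseq (xs @ [c]) (ys @ [v])"
  then obtain zs zs' where "xs @ [c] = zs @ zs'" "subseq zs ys" "subseq zs' [v]"
    by (rule subseq_appendE)
  moreover have "zs' = [] \<or> zs' = [v]"
    using \<open>subseq zs' [v]\<close> by (cases zs') (auto split: if_splits dest: list_emb_Nil2)
  ultimately show "subseq (xs @ [c]) ys \<or> c = v \<and> subseq xs ys" by auto
qed (auto intro: subseq_rev_drop_many)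

lemma sorted_Max_eq_last: "sorted xs \<Longrightarrow> xs \<noteq> [] \<Longrightarrow> Max (set xs) = last xs"
  by (induction xs rule: rev_induct) (auto simp: sorted_append intro!: Max_eqI)

lemma sorted_snoc_last:
  assumes "sorted y" "y \<noteq> []" "last y \<le> v"
  shows "sorted (y @ [v])"
proof -
  have "u \<le> v" if "u \<in> set y" for u
    using that Max_ge[of "set y" u] sorted_Max_eq_last[OF assms(1,2)] assms(3) by simp
  then show ?thesis using assms(1) by (simp add: sorted_append)
qed

lemma sorted_no_aba: "sorted y \<Longrightarrow> a < b \<Longrightarrow> \<not> subseq [a, b, a] y"
  using sorted_subseq[of "[a, b, a]" y] by auto

section \<open>Reduction and pattern containment\<close>

lemma nth_red: "i < length w \<Longrightarrow> red w ! i = card {b \<in> set w. b < w ! i}"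
  by (simp add: red_def)

lemma nth_red_less_iff:
  assumes "i < length w" "j < length w"
  shows "red w ! i < red w ! j \<longleftrightarrow> w ! i < w ! j"
proof
  assume "w ! i < w ! j"
  then have "{b \<in> set w. b < w ! i} \<subset> {b \<in> set w. b < w ! j}"
    using nth_mem[OF assms(1)] by auto
  then show "red w ! i < red w ! j"
    using assms by (simp add: nth_red psubset_card_mono)
next
  assume less: "red w ! i < red w ! j"
  show "w ! i < w ! j"
  proof (rule ccontr)
    assume "\<not> w ! i < w ! j"
    then have "{b \<in> set w. b < w ! j} \<subseteq> {b \<in> set w. b < w ! i}" by auto
    then have "red w ! j \<le> red w ! i" using assms by (simp add: nth_red card_mono)
    with less show False by simp
  qed
qed

lemma red_map_strict_mono:
  assumes "strict_mono_on (set p) f"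
  shows "red (map f p) = red p"
proof -
  have "card {b \<in> f ` set p. b < f a} = card {b \<in> set p. b < a}" if "a \<in> set p" for a
  proof -
    have "{b \<in> f ` set p. b < f a} = f ` {b \<in> set p. b < a}"
      using strict_mono_on_less[OF assms _ that] by auto
    moreover have "inj_on f {b \<in> set p. b < a}"
      using strict_mono_on_imp_inj_on[OF assms] by (rule inj_on_subset) auto
    ultimately show ?thesis by (simp add: card_image)
  qed
  then show ?thesis by (simp add: red_def)
qed

lemma red_id:
  assumes "set p = {..<k}"
  shows "red p = p"
proof -
  have "{b \<in> set p. b < a} = {..<a}" if "a \<in> set p" for a
    using that unfolding assms by auto
  then show ?thesis by (simp add: red_def map_idI)
qed

lemma red_map_nth:
  assumes "sorted_wrt (<) vs" "set p = {..<length vs}"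
  shows "red (map ((!) vs) p) = p"
proof -
  have "strict_mono_on (set p) ((!) vs)"
    using assms by (auto intro!: strict_mono_onI simp: sorted_wrt_iff_nth_less)
  then show ?thesis using assms(2) by (simp add: red_map_strict_mono red_id)
qed

lemma length_red [simp]: "length (red w) = length w"
  by (simp add: red_def)

lemma red_eq_imp_nth_less_iff:
  assumes "red w = p" "i < length p" "j < length p"
  shows "w ! i < w ! j \<longleftrightarrow> p ! i < p ! j"
  using assms nth_red_less_iff[of i w j] by auto

lemma red_eq_imp_nth_eq_iff:
  assumes "red w = p" "i < length p" "j < length p"
  shows "w ! i = w ! j \<longleftrightarrow> p ! i = p ! j"
  using red_eq_imp_nth_less_iff[OF assms] red_eq_imp_nth_less_iff[OF assms(1,3,2)] by auto

lemma red_eq_length4: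
  assumes "red w = [p0, p1, p2, p3]"
  obtains a b c d where "w = [a, b, c, d]"
  using arg_cong[OF assms, of length] by (auto simp: length_Suc_conv numeral_eq_Suc)

lemma contains_iff_subseq: "contains x p \<longleftrightarrow> (\<exists>w. subseq w x \<and> red w = p)"
  unfolding contains_def subseq_conv_nths by metis

lemma contains_0101_iff: "contains x [0,1,0,1] \<longleftrightarrow> (\<exists>a b. a < b \<and> subseq [a,b,a,b] x)"
proof
  assume "contains x [0,1,0,1]"
  then obtain w where sub: "subseq w x" and red: "red w = [0,1,0,1]"
    by (auto simp: contains_iff_subseq)
  obtain a b c d where w: "w = [a,b,c,d]" by (rule red_eq_length4[OF red])
  have "a < b" "c = a" "d = b"
    using red_eq_imp_nth_less_iff[OF red, of 0 1] red_eq_imp_nth_eq_iff[OF red, of 2 0]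
      red_eq_imp_nth_eq_iff[OF red, of 3 1] w by simp_all
  then show "\<exists>a b. a < b \<and> subseq [a,b,a,b] x" using sub w by blast
next
  assume "\<exists>a b. a < b \<and> subseq [a,b,a,b] x"
  then obtain a b where "a < b" "subseq [a,b,a,b] x" by blast
  moreover have "red (map ((!) [a,b]) [0,1,0,1]) = [0,1,0,1]"
    using \<open>a < b\<close> by (intro red_map_nth) auto
  ultimately show "contains x [0,1,0,1]" by (auto simp: contains_iff_subseq)
qed

lemma contains_0102_iff:
  "contains x [0,1,0,2] \<longleftrightarrow> (\<exists>a b c. a < b \<and> b < c \<and> subseq [a,b,a,c] x)"
proof
  assume "contains x [0,1,0,2]"
  then obtain w where sub: "subseq w x" and red: "red w = [0,1,0,2]"
    by (auto simp: contains_iff_subseq)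
  obtain a b c d where w: "w = [a,b,c,d]" by (rule red_eq_length4[OF red])
  have "a < b" "c = a" "b < d"
    using red_eq_imp_nth_less_iff[OF red, of 0 1] red_eq_imp_nth_eq_iff[OF red, of 2 0]
      red_eq_imp_nth_less_iff[OF red, of 1 3] w by simp_all
  then show "\<exists>a b c. a < b \<and> b < c \<and> subseq [a,b,a,c] x" using sub w by blast
next
  assume "\<exists>a b c. a < b \<and> b < c \<and> subseq [a,b,a,c] x"
  then obtain a b c where "a < b" "b < c" "subseq [a,b,a,c] x" by blast
  moreover have "red (map ((!) [a,b,c]) [0,1,0,2]) = [0,1,0,2]"
    using \<open>a < b\<close> \<open>b < c\<close> by (intro red_map_nth) (auto simp: lessThan_nat_numeral)
  ultimately show "contains x [0,1,0,2]" by (auto simp: contains_iff_subseq)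
qed

lemma contains_0121_iff:
  "contains x [0,1,2,1] \<longleftrightarrow> (\<exists>a b c. a < b \<and> b < c \<and> subseq [a,b,c,b] x)"
proof
  assume "contains x [0,1,2,1]"
  then obtain w where sub: "subseq w x" and red: "red w = [0,1,2,1]"
    by (auto simp: contains_iff_subseq)
  obtain a b c d where w: "w = [a,b,c,d]" by (rule red_eq_length4[OF red])
  have "a < b" "b < c" "d = b"
    using red_eq_imp_nth_less_iff[OF red, of 0 1] red_eq_imp_nth_less_iff[OF red, of 1 2]
      red_eq_imp_nth_eq_iff[OF red, of 3 1] w by simp_all
  then show "\<exists>a b c. a < b \<and> b < c \<and> subseq [a,b,c,b] x" using sub w by blast
next
  assume "\<exists>a b c. a < b \<and> b < c \<and> subseq [a,b,c,b] x"
  then obtain a b c where "a < b" "b < c" "subseq [a,b,c,b] x" by blast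
  moreover have "red (map ((!) [a,b,c]) [0,1,2,1]) = [0,1,2,1]"
    using \<open>a < b\<close> \<open>b < c\<close> by (intro red_map_nth) (auto simp: lessThan_nat_numeral)
  ultimately show "contains x [0,1,2,1]" by (auto simp: contains_iff_subseq)
qed

lemma asc_snoc:
  assumes "y \<noteq> []"
  shows "asc (y @ [v]) = asc y + (if last y < v then 1 else 0)"
proof -
  let ?S = "{j. Suc j < length y \<and> y ! j < y ! Suc j}"
  let ?S' = "{j. Suc j < length (y @ [v]) \<and> (y @ [v]) ! j < (y @ [v]) ! Suc j}"
  have "?S' = ?S \<union> (if last y < v then {length y - 1} else {})"
  proof (rule set_eqI)
    fix j
    consider "Suc j < length y" | "Suc j = length y" | "length y < Suc j" by linarith
    then show "j \<in> ?S' \<longleftrightarrow> j \<in> ?S \<union> (if last y < v then {length y - 1} else {})"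
    proof cases
      case 2
      then have "y ! j = last y" using assms by (simp add: last_conv_nth flip: 2)
      with 2 show ?thesis by (auto simp: nth_append)
    qed (use assms in \<open>auto simp: nth_append neq_Nil_conv\<close>)
  qed
  moreover have "finite ?S" by (rule finite_subset[of _ "{..<length y}"]) auto
  moreover have "length y - 1 \<notin> ?S" by auto
  ultimately show ?thesis by (simp add: asc_def)
qed

lemma asc_le_length: "asc s \<le> length s - 1"
proof -
  have "asc s \<le> card {..<length s - 1}"
    unfolding asc_def by (rule card_mono) auto
  then show ?thesis by simp
qed

lemma ascent_seq_singleton [simp]: "ascent_seq [v] \<longleftrightarrow> v = 0"
  by (simp add: ascent_seq_def)

lemma ascent_seq_snoc:
  assumes "y \<noteq> []"
  shows "ascent_seq (y @ [v]) \<longleftrightarrow> ascent_seq y \<and> v \<le> 1 + asc y"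
proof
  assume asc: "ascent_seq (y @ [v])"
  have "y ! i \<le> 1 + asc (take i y)" if "0 < i" "i < length y" for i
    using asc that spec[of _ i] unfolding ascent_seq_def by (auto simp: nth_append)
  moreover have "v \<le> 1 + asc y"
    using asc spec[of _ "length y"] assms unfolding ascent_seq_def by auto
  ultimately show "ascent_seq y \<and> v \<le> 1 + asc y"
    using asc assms by (auto simp: ascent_seq_def nth_append)
next
  assume "ascent_seq y \<and> v \<le> 1 + asc y"
  then show "ascent_seq (y @ [v])"
    using assms by (auto simp: ascent_seq_def nth_append less_Suc_eq)
qed

lemma ascent_seq_nth_le:
  assumes "ascent_seq x" "i < length x"
  shows "x ! i \<le> i"
proof (cases "i = 0")
  case False
  then have "x ! i \<le> 1 + asc (take i x)" using assms by (simp add: ascent_seq_def)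
  also have "\<dots> \<le> i" using asc_le_length[of "take i x"] False assms(2) by simp
  finally show ?thesis .
qed (use assms in \<open>simp add: ascent_seq_def\<close>)

lemma ascent_seq_set_subset:
  assumes "ascent_seq x"
  shows "set x \<subseteq> {..<length x}"
  using ascent_seq_nth_le[OF assms] by (fastforce simp: in_set_conv_nth)

lemma finite_ascent_seqs: "finite {x. ascent_seq x \<and> length x = n}"
proof (rule finite_subset)
  show "{x. ascent_seq x \<and> length x = n} \<subseteq> {x. set x \<subseteq> {..<n} \<and> length x = n}"
    using ascent_seq_set_subset by blast
qed (simp add: finite_lists_length_eq)

section \<open>Avoiding 0101 and 0102\<close>

definition no_abac :: "nat list \<Rightarrow> bool" where
  "no_abac x \<longleftrightarrow> (\<forall>a b c. a < b \<longrightarrow> b \<le> c \<longrightarrow> \<not> subseq [a,b,a,c] x)"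

lemma avoids_0101_0102_iff: "(\<forall>p\<in>{[0,1,0,1], [0,1,0,2]}. avoids x p) \<longleftrightarrow> no_abac x"
  using contains_0101_iff[of x] contains_0102_iff[of x]
  unfolding avoids_def no_abac_def le_less by blast

lemma no_abac_snoc:
  "no_abac (y @ [v]) \<longleftrightarrow> no_abac y \<and> (\<forall>a b. a < b \<longrightarrow> b \<le> v \<longrightarrow> \<not> subseq [a,b,a] y)"
  using subseq_snoc_iff[of "[a,b,a]" c y v for a b c]
  unfolding no_abac_def by (simp, blast)

definition rise_fall_bound :: "nat list \<Rightarrow> nat" where
  "rise_fall_bound y = (if sorted y then Suc (last y) else last y)"

inductive rise_fall :: "nat list \<Rightarrow> bool" where
  init: "rise_fall [0]"
| snoc: "rise_fall y \<Longrightarrow> v \<le> rise_fall_bound y \<Longrightarrow> rise_fall (y @ [v])"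

lemma rise_fall_imp_Cons_0: "rise_fall y \<Longrightarrow> \<exists>ys. y = 0 # ys"
  by (induction rule: rise_fall.induct) auto

lemma rise_fall_step_cases:
  assumes "y \<noteq> []" "v \<le> rise_fall_bound y"
  obtains "v \<le> last y" "v \<le> Max (set y)"
  | "sorted y" "v = Suc (last y)" "v = Suc (Max (set y))" "\<forall>u \<in> set y. u < v"
proof (cases "v \<le> last y")
  case True
  moreover have "last y \<le> Max (set y)" using assms(1) by simp
  ultimately show thesis using that(1) by simp
next
  case False
  then have "sorted y" "v = Suc (last y)" using assms(2) by (auto simp: rise_fall_bound_def split: if_splits)
  moreover have "last y = Max (set y)" using \<open>sorted y\<close> assms(1) by (simp add: sorted_Max_eq_last)
  ultimately show thesis using that(2) assms(1) by (simp add: le_imp_less_Suc)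
qed

lemma rise_fall_asc: "rise_fall y \<Longrightarrow> asc y = Max (set y)"
proof (induction rule: rise_fall.induct)
  case (snoc y v)
  have "y \<noteq> []" using rise_fall_imp_Cons_0[OF snoc.hyps(1)] by auto
  from rise_fall_step_cases[OF \<open>y \<noteq> []\<close> snoc.hyps(2)] show ?case
    using snoc.IH \<open>y \<noteq> []\<close> by cases (auto simp: asc_snoc)
qed (simp add: asc_def)

lemma rise_fall_unit_steps: "rise_fall y \<Longrightarrow> a < Max (set y) \<Longrightarrow> subseq [a, Suc a] y"
proof (induction arbitrary: a rule: rise_fall.induct)
  case (snoc y v)
  have "y \<noteq> []" using rise_fall_imp_Cons_0[OF snoc.hyps(1)] by auto
  from rise_fall_step_cases[OF \<open>y \<noteq> []\<close> snoc.hyps(2)] show ?case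
  proof cases
    case 1
    then show ?thesis using snoc \<open>y \<noteq> []\<close> by (auto intro: subseq_rev_drop_many)
  next
    case 2
    show ?thesis
    proof (cases "a < Max (set y)")
      case True
      then show ?thesis using snoc.IH by (auto intro: subseq_rev_drop_many)
    next
      case False
      then have "a = Max (set y)" using snoc.prems 2 \<open>y \<noteq> []\<close> by auto
      then have "subseq [a] y" using \<open>y \<noteq> []\<close> by (simp add: subseq_singleton_left)
      then have "subseq ([a] @ [v]) (y @ [v])" by (simp only: subseq_append)
      then show ?thesis using 2 \<open>a = Max (set y)\<close> by simp
    qed
  qed
qed simp

lemma rise_fall_unsorted_witness:
  "rise_fall y \<Longrightarrow> \<not> sorted y \<Longrightarrow> subseq [last y, Suc (last y), last y] y"
proof (induction rule: rise_fall.induct)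
  case (snoc y v)
  have "y \<noteq> []" using rise_fall_imp_Cons_0[OF snoc.hyps(1)] by auto
  then have "last y \<le> Max (set y)" by simp
  from rise_fall_step_cases[OF \<open>y \<noteq> []\<close> snoc.hyps(2)] show ?case
  proof cases
    case 1
    show ?thesis
    proof (cases "v = last y \<and> \<not> sorted y")
      case True
      then show ?thesis using snoc.IH by (auto intro: subseq_rev_drop_many)
    next
      case False
      have "v < last y"
      proof (rule ccontr)
        assume "\<not> v < last y"
        then have "sorted y" "v = last y" using False 1 by auto
        then have "sorted (y @ [v])" using \<open>y \<noteq> []\<close> by (simp add: sorted_snoc_last)
        then show False using snoc.prems by simp
      qed
      then have "subseq [v, Suc v] y"
        using rise_fall_unit_steps[OF snoc.hyps(1)] \<open>last y \<le> Max (set y)\<close> by simp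
      then have "subseq ([v, Suc v] @ [v]) (y @ [v])" by (simp only: subseq_append)
      then show ?thesis by simp
    qed
  next
    case 2
    then have "sorted (y @ [v])" using \<open>y \<noteq> []\<close> by (simp add: sorted_snoc_last)
    then show ?thesis using snoc.prems by simp
  qed
qed simp

lemma rise_fall_no_aba: "rise_fall y \<Longrightarrow> a < b \<Longrightarrow> b \<le> last y \<Longrightarrow> \<not> subseq [a, b, a] y"
proof (induction rule: rise_fall.induct)
  case (snoc y v)
  have "\<not> subseq [a, b, a] y"
  proof (cases "sorted y")
    case True
    then show ?thesis using sorted_no_aba snoc.prems by blast
  next
    case False
    then show ?thesis using snoc by (simp add: rise_fall_bound_def)
  qed
  then show ?case using snoc.prems subseq_snoc_iff[of "[a, b]" a y v] by auto
qed simp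

lemma rise_fall_imp_ascent_seq_no_abac: "rise_fall y \<Longrightarrow> ascent_seq y \<and> no_abac y"
proof (induction rule: rise_fall.induct)
  case init
  then show ?case by (simp add: no_abac_def)
next
  case (snoc y v)
  have "y \<noteq> []" using rise_fall_imp_Cons_0[OF snoc.hyps(1)] by auto
  then have "last y \<le> asc y" using rise_fall_asc[OF snoc.hyps(1)] by simp
  then have "ascent_seq (y @ [v])"
    using snoc ascent_seq_snoc[OF \<open>y \<noteq> []\<close>] by (auto simp: rise_fall_bound_def split: if_splits)
  moreover have "no_abac (y @ [v])"
  proof (cases "sorted y")
    case True
    then show ?thesis using snoc sorted_no_aba by (auto simp: no_abac_snoc)
  next
    case False
    then have "v \<le> last y" using snoc.hyps(2) by (simp add: rise_fall_bound_def)
    then show ?thesis using snoc.IH rise_fall_no_aba[OF snoc.hyps(1)] by (auto simp: no_abac_snoc)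
  qed
  ultimately show ?case ..
qed

lemma ascent_seq_no_abac_imp_rise_fall: "ascent_seq x \<Longrightarrow> no_abac x \<Longrightarrow> rise_fall x"
proof (induction x rule: rev_induct)
  case (snoc v y)
  show ?case
  proof (cases "y = []")
    case True
    then show ?thesis using snoc.prems rise_fall.init by simp
  next
    case False
    then have asc: "ascent_seq y" "v \<le> 1 + asc y"
      using snoc.prems(1) by (simp_all add: ascent_seq_snoc)
    have "no_abac y"
      and no_aba: "\<And>a b. a < b \<Longrightarrow> b \<le> v \<Longrightarrow> \<not> subseq [a, b, a] y"
      using snoc.prems(2) unfolding no_abac_snoc by blast+
    with asc have y: "rise_fall y" using snoc.IH by blast
    have "v \<le> rise_fall_bound y"
    proof (cases "sorted y")
      case True
      then show ?thesis
        using asc rise_fall_asc[OF y] sorted_Max_eq_last[OF True False] by (simp add: rise_fall_bound_def)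
    next
      case False
      then show ?thesis
        using no_aba[of "last y" "Suc (last y)"] rise_fall_unsorted_witness[OF y]
        by (force simp: rise_fall_bound_def)
    qed
    then show ?thesis by (rule rise_fall.snoc[OF y])
  qed
qed (simp add: ascent_seq_def)

lemma ascent_seq_no_abac_iff: "ascent_seq x \<and> no_abac x \<longleftrightarrow> rise_fall x"
  using ascent_seq_no_abac_imp_rise_fall rise_fall_imp_ascent_seq_no_abac by blast

lemma rise_fall_bound_Cons_0: "y \<noteq> [] \<Longrightarrow> rise_fall_bound (0 # y) = rise_fall_bound y"
  by (simp add: rise_fall_bound_def)

lemma rise_fall_bound_lift: "w \<noteq> [] \<Longrightarrow> rise_fall_bound (0 # map Suc w) = Suc (rise_fall_bound w)"
  by (simp add: rise_fall_bound_def sorted_map last_map)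

lemma rise_fall_bound_lift_zeros:
  "w \<noteq> [] \<Longrightarrow> rise_fall_bound (0 # map Suc w @ replicate (Suc j) 0) = 0"
  by (auto simp: rise_fall_bound_def sorted_append neq_Nil_conv)

lemma rise_fall_Cons_0: "rise_fall y \<Longrightarrow> rise_fall (0 # y)"
proof (induction rule: rise_fall.induct)
  case init
  show ?case using rise_fall.snoc[OF rise_fall.init, of 0] by simp
next
  case (snoc y v)
  have "y \<noteq> []" using rise_fall_imp_Cons_0[OF snoc.hyps(1)] by auto
  then show ?case
    using rise_fall.snoc[OF snoc.IH, of v] snoc.hyps(2) by (simp add: rise_fall_bound_Cons_0)
qed

lemma rise_fall_lift: "rise_fall w \<Longrightarrow> rise_fall (0 # map Suc w)"
proof (induction rule: rise_fall.induct)
  case init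
  show ?case using rise_fall.snoc[OF rise_fall.init, of 1] by (simp add: rise_fall_bound_def)
next
  case (snoc w v)
  have "w \<noteq> []" using rise_fall_imp_Cons_0[OF snoc.hyps(1)] by auto
  then show ?case
    using rise_fall.snoc[OF snoc.IH, of "Suc v"] snoc.hyps(2) by (simp add: rise_fall_bound_lift)
qed

lemma rise_fall_append_zeros: "rise_fall y \<Longrightarrow> rise_fall (y @ replicate j 0)"
proof (induction j)
  case (Suc j)
  then show ?case using rise_fall.snoc[of "y @ replicate j 0" 0] by (simp add: replicate_append_same)
qed simp

definition rise_falls :: "nat \<Rightarrow> nat list set" where
  "rise_falls n = {x. rise_fall x \<and> length x = n}"

(* the sequences in rise_falls (Suc n) whose second letter is 1 *)
definition lifted_rise_falls :: "nat \<Rightarrow> nat list set" where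
  "lifted_rise_falls n = {0 # map Suc w @ replicate j 0 | w j. rise_fall w \<and> length w + j = n}"

lemma lifted_rise_fall_snoc:
  assumes "rise_fall w" "v \<le> rise_fall_bound (0 # map Suc w @ replicate j 0)"
  shows "\<exists>w' j'. (0 # map Suc w @ replicate j 0) @ [v] = 0 # map Suc w' @ replicate j' 0 \<and> rise_fall w'"
proof -
  have "w \<noteq> []" using rise_fall_imp_Cons_0[OF assms(1)] by auto
  consider "v = 0" | v' where "j = 0" "v = Suc v'"
    using assms(2) rise_fall_bound_lift_zeros[OF \<open>w \<noteq> []\<close>] by (cases j; cases v) auto
  then show ?thesis
  proof cases
    case 1
    then have "(0 # map Suc w @ replicate j 0) @ [v] = 0 # map Suc w @ replicate (Suc j) 0"
      by (simp add: replicate_append_same)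
    then show ?thesis using assms(1) by blast
  next
    case 2
    then have "rise_fall (w @ [v'])"
      using rise_fall.snoc[OF assms(1)] assms(2) \<open>w \<noteq> []\<close> by (simp add: rise_fall_bound_lift)
    moreover have "(0 # map Suc w @ replicate j 0) @ [v] = 0 # map Suc (w @ [v']) @ replicate 0 0"
      using 2 by simp
    ultimately show ?thesis by blast
  qed
qed

lemma rise_fall_cases:
  assumes "rise_fall x" "2 \<le> length x"
  shows "(\<exists>y. x = 0 # y \<and> rise_fall y) \<or> (\<exists>w j. x = 0 # map Suc w @ replicate j 0 \<and> rise_fall w)"
  using assms
proof (induction rule: rise_fall.induct)
  case (snoc y v)
  obtain ys where y: "y = 0 # ys" using rise_fall_imp_Cons_0[OF snoc.hyps(1)] by blast
  show ?case
  proof (cases "ys = []")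
    case True
    then have "v = 0 \<or> v = 1" using snoc.hyps(2) y by (auto simp: rise_fall_bound_def)
    then show ?thesis
    proof
      assume "v = 0"
      then have "y @ [v] = 0 # [0]" using y True by simp
      then show ?thesis using rise_fall.init by blast
    next
      assume "v = 1"
      then have "y @ [v] = 0 # map Suc [0] @ replicate 0 0" using y True by simp
      then show ?thesis using rise_fall.init by blast
    qed
  next
    case False
    then have "2 \<le> length y" using y by (simp add: Suc_le_eq)
    with snoc.IH consider (tail) y' where "y = 0 # y'" "rise_fall y'"
      | (lifted) w j where "y = 0 # map Suc w @ replicate j 0" "rise_fall w"
      by blast
    then show ?thesis
    proof cases
      case (tail y')
      then have "y' \<noteq> []" using rise_fall_imp_Cons_0 by blast
      then have "rise_fall (y' @ [v])"
        using rise_fall.snoc[OF tail(2)] snoc.hyps(2) tail(1) by (simp add: rise_fall_bound_Cons_0)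
      then show ?thesis using tail(1) by auto
    next
      case (lifted w j)
      then show ?thesis using lifted_rise_fall_snoc[of w v j] snoc.hyps(2) by auto
    qed
  qed
qed simp

lemma rise_falls_Suc:
  assumes "1 \<le> n"
  shows "rise_falls (Suc n) = Cons 0 ` rise_falls n \<union> lifted_rise_falls n"
proof
  show "rise_falls (Suc n) \<subseteq> Cons 0 ` rise_falls n \<union> lifted_rise_falls n"
  proof
    fix x assume "x \<in> rise_falls (Suc n)"
    then have x: "rise_fall x" "length x = Suc n" by (auto simp: rise_falls_def)
    with assms rise_fall_cases[OF x(1)] show "x \<in> Cons 0 ` rise_falls n \<union> lifted_rise_falls n"
      by (auto simp: rise_falls_def lifted_rise_falls_def)
  qed
next
  have "rise_fall (0 # map Suc w @ replicate j 0)" if "rise_fall w" for w j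
    using rise_fall_append_zeros[OF rise_fall_lift[OF that]] by simp
  then show "Cons 0 ` rise_falls n \<union> lifted_rise_falls n \<subseteq> rise_falls (Suc n)"
    by (auto simp: rise_falls_def lifted_rise_falls_def intro: rise_fall_Cons_0)
qed

lemma lifted_rise_falls_Suc:
  "lifted_rise_falls (Suc n) = (\<lambda>x. x @ [0]) ` lifted_rise_falls n \<union> (\<lambda>w. 0 # map Suc w) ` rise_falls (Suc n)"
proof
  show "lifted_rise_falls (Suc n) \<subseteq> (\<lambda>x. x @ [0]) ` lifted_rise_falls n \<union> (\<lambda>w. 0 # map Suc w) ` rise_falls (Suc n)"
  proof
    fix x assume "x \<in> lifted_rise_falls (Suc n)"
    then obtain w j where x: "x = 0 # map Suc w @ replicate j 0" "rise_fall w" "length w + j = Suc n"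
      unfolding lifted_rise_falls_def by blast
    show "x \<in> (\<lambda>x. x @ [0]) ` lifted_rise_falls n \<union> (\<lambda>w. 0 # map Suc w) ` rise_falls (Suc n)"
    proof (cases j)
      case 0
      then show ?thesis using x by (auto simp: rise_falls_def)
    next
      case (Suc j')
      then have "x = (0 # map Suc w @ replicate j' 0) @ [0]"
        using x(1) by (simp add: replicate_append_same)
      moreover have "0 # map Suc w @ replicate j' 0 \<in> lifted_rise_falls n"
        using x Suc unfolding lifted_rise_falls_def by auto
      ultimately show ?thesis by blast
    qed
  qed
next
  show "(\<lambda>x. x @ [0]) ` lifted_rise_falls n \<union> (\<lambda>w. 0 # map Suc w) ` rise_falls (Suc n)
      \<subseteq> lifted_rise_falls (Suc n)"
  proof
    fix x assume "x \<in> (\<lambda>x. x @ [0]) ` lifted_rise_falls n \<union> (\<lambda>w. 0 # map Suc w) ` rise_falls (Suc n)"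
    then show "x \<in> lifted_rise_falls (Suc n)"
    proof
      assume "x \<in> (\<lambda>x. x @ [0]) ` lifted_rise_falls n"
      then obtain w j where "x = 0 # map Suc w @ replicate (Suc j) 0" "rise_fall w" "length w + j = n"
        unfolding lifted_rise_falls_def by (auto simp: replicate_append_same)
      then show ?thesis unfolding lifted_rise_falls_def by force
    next
      assume "x \<in> (\<lambda>w. 0 # map Suc w) ` rise_falls (Suc n)"
      then obtain w where "x = 0 # map Suc w @ replicate 0 0" "rise_fall w" "length w + 0 = Suc n"
        by (auto simp: rise_falls_def)
      then show ?thesis unfolding lifted_rise_falls_def by blast
    qed
  qed
qed

lemma finite_rise_falls: "finite (rise_falls n)"
  by (rule finite_subset[OF _ finite_ascent_seqs[of n]])
    (auto simp: rise_falls_def dest: rise_fall_imp_ascent_seq_no_abac)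

lemma finite_lifted_rise_falls: "finite (lifted_rise_falls n)"
proof (cases n)
  case (Suc m)
  then show ?thesis
    using rise_falls_Suc[of n] finite_rise_falls[of "Suc n"] finite_subset by auto
qed (auto simp: lifted_rise_falls_def dest: rise_fall_imp_Cons_0)

lemma card_rise_falls_Suc:
  assumes "1 \<le> n"
  shows "card (rise_falls (Suc n)) = card (rise_falls n) + card (lifted_rise_falls n)"
proof -
  have "Cons 0 ` rise_falls n \<inter> lifted_rise_falls n = {}"
    by (auto simp: rise_falls_def lifted_rise_falls_def Cons_eq_append_conv
        dest!: rise_fall_imp_Cons_0)
  then have "card (rise_falls (Suc n)) = card (Cons 0 ` rise_falls n) + card (lifted_rise_falls n)"
    using rise_falls_Suc[OF assms] finite_rise_falls finite_lifted_rise_falls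
    by (simp add: card_Un_disjoint)
  then show ?thesis by (simp add: card_image)
qed

lemma card_lifted_rise_falls_Suc:
  "card (lifted_rise_falls (Suc n)) = card (lifted_rise_falls n) + card (rise_falls (Suc n))"
proof -
  have "x @ [0] \<noteq> 0 # map Suc w" if "w \<in> rise_falls (Suc n)" for x w
  proof
    assume "x @ [0] = 0 # map Suc w"
    then have "last (x @ [0]) = last (0 # map Suc w)" by simp
    moreover have "w \<noteq> []" using that by (auto simp: rise_falls_def)
    ultimately show False by (simp add: last_map)
  qed
  then have "(\<lambda>x. x @ [0]) ` lifted_rise_falls n \<inter> (\<lambda>w. 0 # map Suc w) ` rise_falls (Suc n) = {}"
    by blast
  then have "card (lifted_rise_falls (Suc n))
      = card ((\<lambda>x. x @ [0]) ` lifted_rise_falls n) + card ((\<lambda>w. 0 # map Suc w) ` rise_falls (Suc n))"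
    using lifted_rise_falls_Suc[of n] finite_rise_falls finite_lifted_rise_falls
    by (simp add: card_Un_disjoint)
  also have "\<dots> = card (lifted_rise_falls n) + card (rise_falls (Suc n))"
    by (simp add: card_image inj_on_def)
  finally show ?thesis .
qed

lemma card_rise_falls:
  "1 \<le> n \<Longrightarrow> card (rise_falls n) = fib (2 * n - 1) \<and> card (lifted_rise_falls n) = fib (2 * n)"
proof (induction n rule: nat_induct_at_least)
  case base
  have "rise_falls 1 = {[0]}"
    by (auto simp: rise_falls_def length_Suc_conv intro: rise_fall.init dest: rise_fall_imp_Cons_0)
  moreover have "lifted_rise_falls 0 = {}"
    by (auto simp: lifted_rise_falls_def dest: rise_fall_imp_Cons_0)
  ultimately show ?case using card_lifted_rise_falls_Suc[of 0] by simp
next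
  case (Suc n)
  then obtain k where k: "n = Suc k" by (cases n) auto
  have "card (rise_falls (Suc n)) = fib (2 * Suc n - 1)"
    using card_rise_falls_Suc[OF Suc.hyps] Suc.IH k by simp
  moreover have "card (lifted_rise_falls (Suc n)) = fib (2 * Suc n)"
    using card_lifted_rise_falls_Suc[of n] Suc.IH k calculation by simp
  ultimately show ?case ..
qed

section \<open>Avoiding 0101 and 0121\<close>

definition no_abcb :: "nat list \<Rightarrow> bool" where
  "no_abcb x \<longleftrightarrow> (\<forall>a b c. a < b \<longrightarrow> (c = a \<or> b < c) \<longrightarrow> \<not> subseq [a,b,c,b] x)"

lemma avoids_0101_0121_iff: "(\<forall>p\<in>{[0,1,0,1], [0,1,2,1]}. avoids x p) \<longleftrightarrow> no_abcb x"
  using contains_0101_iff[of x] contains_0121_iff[of x]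
  unfolding avoids_def no_abcb_def by blast

lemma no_abcb_snoc:
  "no_abcb (y @ [v]) \<longleftrightarrow> no_abcb y \<and> (\<forall>a c. a < v \<longrightarrow> (c = a \<or> v < c) \<longrightarrow> \<not> subseq [a,v,c] y)"
  using subseq_snoc_iff[of "[a,b,c]" b y v for a b c]
  unfolding no_abcb_def by (simp, blast)

lemma Suc_Max_not_in_set: "Suc (Max (set xs)) \<notin> set xs"
proof
  assume "Suc (Max (set xs)) \<in> set xs"
  then have "Suc (Max (set xs)) \<le> Max (set xs)" by (rule Max_ge[OF finite_set])
  then show False by simp
qed

inductive reset_seq :: "nat list \<Rightarrow> bool" where
  init: "reset_seq [0]"
| snoc: "reset_seq y \<Longrightarrow> v = 0 \<or> v = last y \<or> v = Suc (Max (set y)) \<Longrightarrow> reset_seq (y @ [v])"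

lemma reset_seq_imp_Cons_0: "reset_seq y \<Longrightarrow> \<exists>ys. y = 0 # ys"
  by (induction rule: reset_seq.induct) auto

lemma reset_seq_last: "reset_seq y \<Longrightarrow> last y = 0 \<or> last y = Max (set y)"
proof (induction rule: reset_seq.induct)
  case (snoc y v)
  have "y \<noteq> []" using reset_seq_imp_Cons_0[OF snoc.hyps(1)] by auto
  then have "last y \<le> Max (set y)" by simp
  then show ?case using snoc \<open>y \<noteq> []\<close> by (auto simp: max_def)
qed simp

lemma reset_seq_asc: "reset_seq y \<Longrightarrow> asc y = Max (set y)"
proof (induction rule: reset_seq.induct)
  case (snoc y v)
  have "y \<noteq> []" using reset_seq_imp_Cons_0[OF snoc.hyps(1)] by auto
  then have "last y \<le> Max (set y)" by simp
  then show ?case using snoc \<open>y \<noteq> []\<close> by (auto simp: asc_snoc max_def less_Suc_eq_le)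
qed (simp add: asc_def)

lemma reset_seq_set: "reset_seq y \<Longrightarrow> set y = {..Max (set y)}"
proof (induction rule: reset_seq.induct)
  case (snoc y v)
  obtain ys where ys: "y = 0 # ys" using reset_seq_imp_Cons_0[OF snoc.hyps(1)] by blast
  then have "y \<noteq> []" "0 \<in> set y" by auto
  then have "last y \<in> set y" by simp
  then consider "v \<in> set y" | "v = Suc (Max (set y))" using snoc.hyps(2) \<open>0 \<in> set y\<close> by blast
  then show ?case
  proof cases
    case 1
    then have "set (y @ [v]) = set y" by auto
    then show ?thesis using snoc.IH by simp
  next
    case 2
    then have "Max (set (y @ [v])) = v" using \<open>y \<noteq> []\<close> by (simp add: max_def)
    then show ?thesis using snoc.IH 2 by (simp add: atMost_Suc)
  qed
qed auto

lemma reset_seq_nonlast_witness: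
  assumes "reset_seq y" "u \<in> set y" "0 < u" "u \<noteq> last y"
  shows "\<exists>c. (c = 0 \<or> u < c) \<and> subseq [0, u, c] y"
  using assms
proof (induction rule: reset_seq.induct)
  case (snoc y v)
  obtain ys where ys: "y = 0 # ys" using reset_seq_imp_Cons_0[OF snoc.hyps(1)] by blast
  have "u \<in> set y" using snoc.prems by auto
  show ?case
  proof (cases "u = last y")
    case False
    then show ?thesis using snoc.IH \<open>u \<in> set y\<close> snoc.prems(2)
      by (auto intro: subseq_rev_drop_many)
  next
    case True
    have "subseq [0, u] y" using ys \<open>u \<in> set y\<close> snoc.prems(2) by (simp add: subseq_singleton_left)
    then have "subseq ([0, u] @ [v]) (y @ [v])" by (simp only: subseq_append)
    moreover have "v = 0 \<or> u < v"
      using snoc.hyps(2) snoc.prems(3) True \<open>u \<in> set y\<close> by (auto simp: less_Suc_eq_le)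
    ultimately show ?thesis by auto
  qed
qed simp

lemma reset_seq_no_aba_last: "reset_seq y \<Longrightarrow> a < last y \<Longrightarrow> \<not> subseq [a, last y, a] y"
proof (induction rule: reset_seq.induct)
  case (snoc y v)
  have "y \<noteq> []" using reset_seq_imp_Cons_0[OF snoc.hyps(1)] by auto
  have "\<not> subseq [a, v, a] y"
  proof (cases "v = last y")
    case True
    then show ?thesis using snoc by simp
  next
    case False
    then have "v \<notin> set y" using snoc.hyps(2) snoc.prems Suc_Max_not_in_set by auto
    then show ?thesis using set_mono_subseq by fastforce
  qed
  then show ?case using snoc.prems subseq_snoc_iff[of "[a, v]" a y v] by auto
qed simp

lemma reset_seq_imp_ascent_seq_no_abcb: "reset_seq y \<Longrightarrow> ascent_seq y \<and> no_abcb y"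
proof (induction rule: reset_seq.induct)
  case init
  then show ?case by (simp add: no_abcb_def)
next
  case (snoc y v)
  have "y \<noteq> []" using reset_seq_imp_Cons_0[OF snoc.hyps(1)] by auto
  have "ascent_seq (y @ [v])"
    using snoc \<open>y \<noteq> []\<close> reset_seq_asc[OF snoc.hyps(1)]
    by (auto simp: ascent_seq_snoc intro: le_SucI)
  moreover have "\<not> subseq [a, v, c] y" if "a < v" "c = a \<or> v < c" for a c
  proof
    assume sub: "subseq [a, v, c] y"
    then have "v \<in> set y" "c \<in> set y" using set_mono_subseq[OF sub] by auto
    then have "v = last y" using snoc.hyps(2) that(1) Suc_Max_not_in_set by auto
    then have "v = Max (set y)" using reset_seq_last[OF snoc.hyps(1)] that(1) by auto
    from that(2) show False
    proof
      assume "c = a"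
      then show False
        using sub reset_seq_no_aba_last[OF snoc.hyps(1)] \<open>v = last y\<close> that(1) by simp
    next
      assume "v < c"
      then show False using \<open>c \<in> set y\<close> \<open>v = Max (set y)\<close> by (simp add: leD)
    qed
  qed
  ultimately show ?case using snoc.IH by (simp add: no_abcb_snoc)
qed

lemma ascent_seq_no_abcb_imp_reset_seq: "ascent_seq x \<Longrightarrow> no_abcb x \<Longrightarrow> reset_seq x"
proof (induction x rule: rev_induct)
  case (snoc v y)
  show ?case
  proof (cases "y = []")
    case True
    then show ?thesis using snoc.prems reset_seq.init by simp
  next
    case False
    then have asc: "ascent_seq y" "v \<le> 1 + asc y"
      using snoc.prems(1) by (simp_all add: ascent_seq_snoc)
    have "no_abcb y"
      and no_avc: "\<And>a c. a < v \<Longrightarrow> c = a \<or> v < c \<Longrightarrow> \<not> subseq [a, v, c] y"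
      using snoc.prems(2) unfolding no_abcb_snoc by blast+
    with asc have y: "reset_seq y" using snoc.IH by blast
    have "v = 0 \<or> v = last y \<or> v = Suc (Max (set y))"
    proof (rule ccontr)
      assume "\<not> ?thesis"
      then have "0 < v" "v \<le> Max (set y)" "v \<noteq> last y"
        using asc reset_seq_asc[OF y] by auto
      then obtain c where "c = 0 \<or> v < c" "subseq [0, v, c] y"
        using reset_seq_nonlast_witness[OF y] reset_seq_set[OF y] by blast
      then show False using no_avc \<open>0 < v\<close> by blast
    qed
    then show ?thesis by (rule reset_seq.snoc[OF y])
  qed
qed (simp add: ascent_seq_def)

lemma ascent_seq_no_abcb_iff: "ascent_seq x \<and> no_abcb x \<longleftrightarrow> reset_seq x"
  using ascent_seq_no_abcb_imp_reset_seq reset_seq_imp_ascent_seq_no_abcb by blast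

lemma card_snoc_image: "card ((\<lambda>y. y @ [f y]) ` A) = card A"
  by (rule card_image) (auto simp: inj_on_def)

lemma snoc_images_disjoint:
  "(\<And>y. y \<in> A \<Longrightarrow> y \<in> B \<Longrightarrow> f y \<noteq> g y) \<Longrightarrow> (\<lambda>y. y @ [f y]) ` A \<inter> (\<lambda>y. y @ [g y]) ` B = {}"
  by auto

definition reset_seqs :: "nat \<Rightarrow> nat list set" where
  "reset_seqs n = {x. reset_seq x \<and> length x = n}"

definition nonzero_last_reset_seqs :: "nat \<Rightarrow> nat list set" where
  "nonzero_last_reset_seqs n = {x \<in> reset_seqs n. last x \<noteq> 0}"

lemma reset_seqs_SucE:
  assumes "x \<in> reset_seqs (Suc n)" "1 \<le> n"
  obtains y v where "x = y @ [v]" "y \<in> reset_seqs n" "v = 0 \<or> v = last y \<or> v = Suc (Max (set y))"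
proof -
  have "reset_seq x" "length x = Suc n" using assms(1) by (simp_all add: reset_seqs_def)
  then show thesis
  proof (cases rule: reset_seq.cases)
    case init
    then show thesis using assms(2) \<open>length x = Suc n\<close> by simp
  next
    case (snoc y v)
    then show thesis using that \<open>length x = Suc n\<close> by (simp add: reset_seqs_def)
  qed
qed

lemma reset_seqs_Suc:
  assumes "1 \<le> n"
  shows "reset_seqs (Suc n) = (\<lambda>y. y @ [0]) ` reset_seqs n
    \<union> (\<lambda>y. y @ [Suc (Max (set y))]) ` reset_seqs n
    \<union> (\<lambda>y. y @ [last y]) ` nonzero_last_reset_seqs n" (is "_ = ?R")
proof
  show "reset_seqs (Suc n) \<subseteq> ?R"
  proof
    fix x assume "x \<in> reset_seqs (Suc n)"
    then obtain y v where "x = y @ [v]" "y \<in> reset_seqs n" "v = 0 \<or> v = last y \<or> v = Suc (Max (set y))"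
      using assms by (rule reset_seqs_SucE)
    then show "x \<in> ?R" by (cases "last y = 0") (auto simp: nonzero_last_reset_seqs_def)
  qed
qed (auto simp: reset_seqs_def nonzero_last_reset_seqs_def intro: reset_seq.snoc)

lemma nonzero_last_reset_seqs_Suc:
  assumes "1 \<le> n"
  shows "nonzero_last_reset_seqs (Suc n) = (\<lambda>y. y @ [Suc (Max (set y))]) ` reset_seqs n
    \<union> (\<lambda>y. y @ [last y]) ` nonzero_last_reset_seqs n" (is "_ = ?R")
proof
  show "nonzero_last_reset_seqs (Suc n) \<subseteq> ?R"
  proof
    fix x assume x: "x \<in> nonzero_last_reset_seqs (Suc n)"
    then obtain y v where "x = y @ [v]" "y \<in> reset_seqs n" "v = 0 \<or> v = last y \<or> v = Suc (Max (set y))"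
      using assms by (auto simp: nonzero_last_reset_seqs_def elim: reset_seqs_SucE)
    then show "x \<in> ?R" using x by (auto simp: nonzero_last_reset_seqs_def)
  qed
qed (auto simp: reset_seqs_def nonzero_last_reset_seqs_def intro: reset_seq.snoc)

lemma finite_reset_seqs: "finite (reset_seqs n)"
  by (rule finite_subset[OF _ finite_ascent_seqs[of n]])
    (auto simp: reset_seqs_def dest: reset_seq_imp_ascent_seq_no_abcb)

lemma card_reset_seqs_Suc:
  assumes "1 \<le> n"
  shows "card (reset_seqs (Suc n)) = 2 * card (reset_seqs n) + card (nonzero_last_reset_seqs n)"
    and "card (nonzero_last_reset_seqs (Suc n)) = card (reset_seqs n) + card (nonzero_last_reset_seqs n)"
proof -
  have "last y \<noteq> Suc (Max (set y))" "Suc (Max (set y)) \<noteq> last y" if "y \<in> reset_seqs n" for y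
  proof -
    have "y \<noteq> []" using that by (auto simp: reset_seqs_def dest: reset_seq_imp_Cons_0)
    then show "last y \<noteq> Suc (Max (set y))" using Suc_Max_not_in_set[of y] last_in_set by metis
    then show "Suc (Max (set y)) \<noteq> last y" by simp
  qed
  then have disj: "(\<lambda>y. y @ [0]) ` reset_seqs n \<inter> (\<lambda>y. y @ [Suc (Max (set y))]) ` reset_seqs n = {}"
    "(\<lambda>y. y @ [0]) ` reset_seqs n \<inter> (\<lambda>y. y @ [last y]) ` nonzero_last_reset_seqs n = {}"
    "(\<lambda>y. y @ [Suc (Max (set y))]) ` reset_seqs n \<inter> (\<lambda>y. y @ [last y]) ` nonzero_last_reset_seqs n = {}"
    by (auto intro!: snoc_images_disjoint simp: nonzero_last_reset_seqs_def)
  have fin: "finite (nonzero_last_reset_seqs n)"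
    using finite_reset_seqs[of n] by (simp add: nonzero_last_reset_seqs_def)
  show "card (reset_seqs (Suc n)) = 2 * card (reset_seqs n) + card (nonzero_last_reset_seqs n)"
    using reset_seqs_Suc[OF assms] disj finite_reset_seqs fin
    by (simp add: card_Un_disjoint Int_Un_distrib2 card_snoc_image)
  show "card (nonzero_last_reset_seqs (Suc n)) = card (reset_seqs n) + card (nonzero_last_reset_seqs n)"
    using nonzero_last_reset_seqs_Suc[OF assms] disj finite_reset_seqs fin
    by (simp add: card_Un_disjoint card_snoc_image)
qed

lemma card_reset_seqs:
  "1 \<le> n \<Longrightarrow> card (reset_seqs n) = fib (2 * n - 1) \<and> card (nonzero_last_reset_seqs n) = fib (2 * n - 2)"
proof (induction n rule: nat_induct_at_least)
  case base
  have "reset_seqs 1 = {[0]}"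
    by (auto simp: reset_seqs_def length_Suc_conv intro: reset_seq.init dest: reset_seq_imp_Cons_0)
  then show ?case by (simp add: nonzero_last_reset_seqs_def)
next
  case (Suc n)
  then obtain k where k: "n = Suc k" by (cases n) auto
  show ?case using card_reset_seqs_Suc[OF Suc.hyps] Suc.IH k by simp
qed

theorem theorem3p1:
  fixes n :: nat
  assumes "n \<ge> 1"
  shows "a_P {[0,1,0,1], [0,1,0,2]} n = fib (2 * n - 1)
       \<and> a_P {[0,1,0,1], [0,1,2,1]} n = fib (2 * n - 1)"
proof
  have "{x. ascent_seq x \<and> length x = n \<and> (\<forall>p\<in>{[0,1,0,1], [0,1,0,2]}. avoids x p)} = rise_falls n"
    unfolding avoids_0101_0102_iff rise_falls_def using ascent_seq_no_abac_iff by blast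
  then show "a_P {[0,1,0,1], [0,1,0,2]} n = fib (2 * n - 1)"
    using card_rise_falls[OF assms] by (simp add: a_P_def)
next
  have "{x. ascent_seq x \<and> length x = n \<and> (\<forall>p\<in>{[0,1,0,1], [0,1,2,1]}. avoids x p)} = reset_seqs n"
    unfolding avoids_0101_0121_iff reset_seqs_def using ascent_seq_no_abcb_iff by blast
  then show "a_P {[0,1,0,1], [0,1,2,1]} n = fib (2 * n - 1)"
    using card_reset_seqs[OF assms] by (simp add: a_P_def)
qed

end
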